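(* Let $w\in[0,\infty)^n$, $c\in(0,\infty)^n$, and let $(A_1,\dots,A_k)$ be any Sidney decomposition of $\mathcal G$ (with respect to $w,c$). Then there exist $i\in\{1,\dots,k\}$ and a search whose support is $A_1\cup\dots\cup A_i$ that minimizes $J^+(\cdot\,;w,c)$ over $\mathcal S$.
   Context: $\mathcal G=([n],\mathcal E)$ is a finite directed acyclic graph on $[n]=\{1,\dots,n\}$. A search is a tuple $s=(s_1,\dots,s_k)$ of distinct vertices ($0\le k\le n$) such that every in-neighbor of each $s_i$ belongs to $\{s_1,\dots,s_{i-1}\}$; $\mathcal S$ denotes the set of searches. The support of a search is its underlying (unordered) set; an initial set is the support of a search. For $A\subseteq[n]$, $\mathcal G|_A$ is the induced sub-DAG on $A$. For $w\in[0,\infty)^n$, $c\in(0,\infty)^n$: $J(s;w,c)=\big(\sum_{i=1}^{|s|}c_{s_i}(1-\sum_{j<i}w_{s_j})\big)/\big(\sum_{i=1}^{|s|}w_{s_i}\big)$ if the denominator is positive and $+\infty$ otherwise (in particular for the empty search); $J^+=\max\{0,J\}$ with $\max\{0,+\infty\}=+\infty$. The density of a nonempty $A\subseteq[n]$ is $\rho(A)=\sum_{i\in A}w_i/\sum_{i\in A}c_i$, and $\rho(\emptyset)=0$. A Sidney decomposition is an ordered partition $(A_1,\dots,A_k)$ of $[n]$ into nonempty sets such that, for each $i$, $A_i$ is an initial set of $\mathcal G|_{A_i\cup\dots\cup A_k}$ of maximum density among all initial sets of $\mathcal G|_{A_i\cup\dots\cup A_k}$. *)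

theory Defs
  imports Complex_Main "HOL-Library.Extended_Real"
begin

text \<open>A DAG on [n] = {1..n} is given by an edge relation E; (u,v) \<in> E means u is an in-neighbour of v.\<close>

definition is_dag :: "nat \<Rightarrow> (nat \<times> nat) set \<Rightarrow> bool" where
  "is_dag n E \<longleftrightarrow> E \<subseteq> {1..n} \<times> {1..n} \<and> acyclic E"

definition is_search_in :: "(nat \<times> nat) set \<Rightarrow> nat set \<Rightarrow> nat list \<Rightarrow> bool" where
  "is_search_in E B s \<longleftrightarrow> distinct s \<and> set s \<subseteq> B \<and>
     (\<forall>i < length s. \<forall>u \<in> B. (u, s ! i) \<in> E \<longrightarrow> u \<in> set (take i s))"

definition is_search :: "nat \<Rightarrow> (nat \<times> nat) set \<Rightarrow> nat list \<Rightarrow> bool" where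
  "is_search n E s \<longleftrightarrow> is_search_in E {1..n} s"

definition initial_set_in :: "(nat \<times> nat) set \<Rightarrow> nat set \<Rightarrow> nat set \<Rightarrow> bool" where
  "initial_set_in E B A \<longleftrightarrow> (\<exists>s. is_search_in E B s \<and> set s = A)"

definition Jcost :: "(nat \<Rightarrow> real) \<Rightarrow> (nat \<Rightarrow> real) \<Rightarrow> nat list \<Rightarrow> ereal" where
  "Jcost w c s =
     (let den = (\<Sum>i<length s. w (s ! i));
          num = (\<Sum>i<length s. c (s ! i) * (1 - (\<Sum>j<i. w (s ! j))))
      in if den > 0 then ereal (num / den) else \<infinity>)"

definition Jplus :: "(nat \<Rightarrow> real) \<Rightarrow> (nat \<Rightarrow> real) \<Rightarrow> nat list \<Rightarrow> ereal" where
  "Jplus w c s = max 0 (Jcost w c s)"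

definition density :: "(nat \<Rightarrow> real) \<Rightarrow> (nat \<Rightarrow> real) \<Rightarrow> nat set \<Rightarrow> real" where
  "density w c A = (if A = {} then 0 else sum w A / sum c A)"

text \<open>Sidney decomposition (A_1,...,A_k) = As ! 0, ..., As ! (k-1).\<close>
definition sidney_decomposition ::
  "nat \<Rightarrow> (nat \<times> nat) set \<Rightarrow> (nat \<Rightarrow> real) \<Rightarrow> (nat \<Rightarrow> real) \<Rightarrow> nat set list \<Rightarrow> bool" where
  "sidney_decomposition n E w c As \<longleftrightarrow>
     (\<forall>i < length As. As ! i \<noteq> {}) \<and>
     (\<forall>i j. i < j \<and> j < length As \<longrightarrow> As ! i \<inter> As ! j = {}) \<and>
     \<Union> (set As) = {1..n} \<and>
     (\<forall>i < length As.
        let B = \<Union> (set (drop i As)) in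
        initial_set_in E B (As ! i) \<and>
        (\<forall>A'. initial_set_in E B A' \<longrightarrow> density w c A' \<le> density w c (As ! i)))"

end

theory Submission
  imports Defs
begin

text \<open>For a threshold \<theta> \<ge> 0 we work with the penalized cost
  \<alpha> c(s) - \<theta> w(s) - (sum over i < j of w(s_i) c(s_j)) of a search s: for \<theta> > 0,
  J+(s) < \<theta> exactly when its value for \<alpha> = 1 is negative, and concatenating searches only
  shifts \<alpha> by the weight already found. Take a search with negative penalized cost. Completing
  it by the rest of the first Sidney block A_1 and then moving A_1 to the front does not increase
  the cost: since A_1 has maximum density among initial sets, the part of an initial set outside
  A_1 is at most as dense as A_1, and what it leaves of A_1 is at least as dense, which is what the
  exchange argument needs. Recursing on the remaining blocks gives an at least as good search
  supported on A_1 \<union> ... \<union> A_i. As J+ takes finitely many values, a threshold just above its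
  minimum turns this into an optimal search of that form.\<close>

lemma filter_eq_append_ConsD:
  "filter P s = xs @ x # ys \<Longrightarrow> \<exists>as bs. s = as @ x # bs \<and> filter P as = xs"
proof (induction xs arbitrary: s)
  case Nil
  then obtain us vs where "s = us @ x # vs" "\<forall>u\<in>set us. \<not> P u"
    using filter_eq_ConsD[of P s x ys] by auto
  then show ?case by auto
next
  case (Cons y xs)
  then obtain us vs where "s = us @ y # vs" "\<forall>u\<in>set us. \<not> P u" "P y"
    and "filter P vs = xs @ x # ys"
    by (auto dest: filter_eq_ConsD)
  with Cons.IH obtain as bs where "vs = as @ x # bs" "filter P as = xs" by blast
  with \<open>s = us @ y # vs\<close> \<open>\<forall>u\<in>set us. \<not> P u\<close> \<open>P y\<close> show ?case
    by (intro exI[of _ "us @ y # as"] exI[of _ bs]) auto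
qed

lemma sum_list_map_filter_partition:
  fixes f :: "'a \<Rightarrow> 'b::comm_monoid_add"
  shows "(\<Sum>x\<leftarrow>filter P xs. f x) + (\<Sum>x\<leftarrow>filter (\<lambda>x. \<not> P x) xs. f x) = (\<Sum>x\<leftarrow>xs. f x)"
  by (induction xs) (auto simp: add_ac)

section \<open>Searches and initial sets\<close>

lemma is_search_in_iff:
  "is_search_in E V s \<longleftrightarrow> distinct s \<and> set s \<subseteq> V \<and>
     (\<forall>xs x ys. s = xs @ x # ys \<longrightarrow> (\<forall>u\<in>V. (u, x) \<in> E \<longrightarrow> u \<in> set xs))"
proof -
  have "(\<forall>i < length s. \<forall>u \<in> V. (u, s ! i) \<in> E \<longrightarrow> u \<in> set (take i s)) \<longleftrightarrow>
        (\<forall>xs x ys. s = xs @ x # ys \<longrightarrow> (\<forall>u\<in>V. (u, x) \<in> E \<longrightarrow> u \<in> set xs))"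
  proof (intro iffI allI impI ballI)
    fix xs x ys u
    assume H: "\<forall>i < length s. \<forall>u \<in> V. (u, s ! i) \<in> E \<longrightarrow> u \<in> set (take i s)"
      and s: "s = xs @ x # ys" and u: "u \<in> V" "(u, x) \<in> E"
    have "length xs < length s" "s ! length xs = x" "take (length xs) s = xs" using s by auto
    then show "u \<in> set xs" using H u by metis
  next
    fix i u
    assume "\<forall>xs x ys. s = xs @ x # ys \<longrightarrow> (\<forall>u\<in>V. (u, x) \<in> E \<longrightarrow> u \<in> set xs)"
      and "i < length s" "u \<in> V" "(u, s ! i) \<in> E"
    then show "u \<in> set (take i s)" using id_take_nth_drop by blast
  qed
  then show ?thesis by (simp add: is_search_in_def)
qed

lemma is_search_in_Nil [simp]: "is_search_in E V []"
  by (simp add: is_search_in_def)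

lemma is_search_in_take: "is_search_in E V s \<Longrightarrow> is_search_in E V (take k s)"
  unfolding is_search_in_def by (auto simp: min_def dest: in_set_takeD)

lemma is_search_in_closed:
  "is_search_in E V s \<Longrightarrow> v \<in> set s \<Longrightarrow> u \<in> V \<Longrightarrow> (u, v) \<in> E \<Longrightarrow> u \<in> set s"
  unfolding is_search_in_iff by (metis Un_iff set_append split_list)

lemma is_search_in_filter:
  assumes "is_search_in E V s"
  shows "is_search_in E {x \<in> V. P x} (filter P s)"
  unfolding is_search_in_iff
proof (intro conjI allI impI ballI)
  fix xs x ys u
  assume "filter P s = xs @ x # ys" and u: "u \<in> {x \<in> V. P x}" "(u, x) \<in> E"
  then obtain as bs where s: "s = as @ x # bs" and "filter P as = xs"
    by (blast dest: filter_eq_append_ConsD)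
  moreover have "u \<in> set as" using assms s u unfolding is_search_in_iff by blast
  ultimately show "u \<in> set xs" using u by auto
qed (use assms in \<open>auto simp: is_search_in_def\<close>)

lemma is_search_in_superset:
  "is_search_in E A s \<Longrightarrow> \<forall>v\<in>set s. \<forall>u\<in>V. (u, v) \<in> E \<longrightarrow> u \<in> A \<Longrightarrow> A \<subseteq> V
   \<Longrightarrow> is_search_in E V s"
  unfolding is_search_in_def by (meson nth_mem subset_iff)

lemma is_search_in_filter_initial:
  assumes "is_search_in E V s" "initial_set_in E V Y"
  shows "is_search_in E V (filter (\<lambda>x. x \<in> Y) s)"
proof -
  obtain y where y: "is_search_in E V y" "set y = Y"
    using assms(2) by (auto simp: initial_set_in_def)
  have "is_search_in E {x \<in> V. x \<in> Y} (filter (\<lambda>x. x \<in> Y) s)"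
    by (rule is_search_in_filter[OF assms(1)])
  moreover have
    "\<forall>v\<in>set (filter (\<lambda>x. x \<in> Y) s). \<forall>u\<in>V. (u, v) \<in> E \<longrightarrow> u \<in> {x \<in> V. x \<in> Y}"
    using is_search_in_closed[OF y(1)] y(2) by auto
  ultimately show ?thesis by (rule is_search_in_superset) blast
qed

lemma is_search_in_append:
  assumes a: "is_search_in E V a" and t: "is_search_in E (V - set a) t"
  shows "is_search_in E V (a @ t)"
  unfolding is_search_in_iff
proof (intro conjI allI impI ballI)
  fix xs x ys u
  assume at: "a @ t = xs @ x # ys" and u: "u \<in> V" "(u, x) \<in> E"
  show "u \<in> set xs"
  proof (cases "length xs < length a")
    case True
    have "take (length xs) a = xs" "a ! length xs = x"
      using arg_cong[OF at, of "take (length xs)"] arg_cong[OF at, of "\<lambda>l. l ! length xs"] True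
      by (simp_all add: nth_append)
    then have "a = xs @ x # drop (Suc (length xs)) a" using id_take_nth_drop[OF True] by simp
    then show ?thesis using a u unfolding is_search_in_iff by blast
  next
    case False
    have "take (length a) xs = a" "t = drop (length a) xs @ x # ys"
      using arg_cong[OF at, of "take (length a)"] arg_cong[OF at, of "drop (length a)"] False
      by simp_all
    then have "u \<in> set a \<or> u \<in> set (drop (length a) xs)" using t u unfolding is_search_in_iff by blast
    then show ?thesis by (metis in_set_dropD in_set_takeD \<open>take (length a) xs = a\<close>)
  qed
qed (use a t in \<open>auto simp: is_search_in_def\<close>)

lemma is_search_in_append_filter:
  assumes "is_search_in E V p" "is_search_in E V a"
  shows "is_search_in E V (p @ filter (\<lambda>x. x \<notin> set p) a)"
proof -
  have "{x \<in> V. x \<notin> set p} = V - set p" by auto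
  then show ?thesis
    using is_search_in_filter[OF assms(2), of "\<lambda>x. x \<notin> set p"] is_search_in_append[OF assms(1)]
    by simp
qed

lemma finite_searches:
  assumes "finite V"
  shows "finite {s. is_search_in E V s}"
proof (rule finite_subset)
  show "{s. is_search_in E V s} \<subseteq> {s. set s \<subseteq> V \<and> length s \<le> card V}"
    using assms by (auto simp: is_search_in_def distinct_card[symmetric] intro: card_mono)
qed (simp add: assms finite_lists_length_le)

lemma initial_set_in_Un:
  assumes "initial_set_in E V X" "initial_set_in E V Y"
  shows "initial_set_in E V (X \<union> Y)"
proof -
  obtain x y where x: "is_search_in E V x" "set x = X" and y: "is_search_in E V y" "set y = Y"
    using assms by (auto simp: initial_set_in_def)
  have "set (x @ filter (\<lambda>v. v \<notin> set x) y) = X \<union> Y" using x(2) y(2) by auto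
  then show ?thesis
    using is_search_in_append_filter[OF x(1) y(1)] by (auto simp: initial_set_in_def)
qed

lemma initial_set_in_Int:
  assumes "initial_set_in E V X" "initial_set_in E V Y"
  shows "initial_set_in E V (X \<inter> Y)"
proof -
  obtain x where x: "is_search_in E V x" "set x = X"
    using assms(1) by (auto simp: initial_set_in_def)
  have "set (filter (\<lambda>v. v \<in> Y) x) = X \<inter> Y" using x(2) by auto
  then show ?thesis
    using is_search_in_filter_initial[OF x(1) assms(2)] by (auto simp: initial_set_in_def)
qed

lemma initial_set_in_finite: "initial_set_in E V X \<Longrightarrow> finite X"
  by (auto simp: initial_set_in_def)

lemma initial_set_in_subset: "initial_set_in E V X \<Longrightarrow> X \<subseteq> V"
  by (auto simp: initial_set_in_def is_search_in_def)

lemma sum_list_search_eq_sum: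
  "is_search_in E V s \<Longrightarrow> (\<Sum>x\<leftarrow>s. f x) = sum f (set s)"
  by (simp add: is_search_in_def sum_list_distinct_conv_sum_set)

lemma search_weights_nonneg:
  fixes w c :: "nat \<Rightarrow> real"
  assumes "is_search_in E V s" "\<forall>v\<in>V. 0 \<le> w v" "\<forall>v\<in>V. 0 < c v"
  shows "\<forall>x\<in>set s. 0 \<le> w x \<and> 0 \<le> c x"
proof
  fix x assume "x \<in> set s"
  then have "x \<in> V" using assms(1) by (auto simp: is_search_in_def)
  then show "0 \<le> w x \<and> 0 \<le> c x" using assms(2,3) by (simp add: less_imp_le)
qed

section \<open>The penalized cost\<close>

fun pair_sum :: "('a \<Rightarrow> real) \<Rightarrow> ('a \<Rightarrow> real) \<Rightarrow> 'a list \<Rightarrow> real" where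
  "pair_sum w c [] = 0"
| "pair_sum w c (x # xs) = w x * (\<Sum>y\<leftarrow>xs. c y) + pair_sum w c xs"

definition penalized_cost ::
  "('a \<Rightarrow> real) \<Rightarrow> ('a \<Rightarrow> real) \<Rightarrow> real \<Rightarrow> real \<Rightarrow> 'a list \<Rightarrow> real" where
  "penalized_cost w c \<theta> \<alpha> s = \<alpha> * (\<Sum>x\<leftarrow>s. c x) - \<theta> * (\<Sum>x\<leftarrow>s. w x) - pair_sum w c s"

lemma pair_sum_append:
  "pair_sum w c (xs @ ys) = pair_sum w c xs + (\<Sum>x\<leftarrow>xs. w x) * (\<Sum>y\<leftarrow>ys. c y) + pair_sum w c ys"
  by (induction xs) (auto simp: algebra_simps)

lemma pair_sum_conv_nth:
  "pair_sum w c s = (\<Sum>i<length s. c (s ! i) * (\<Sum>j<i. w (s ! j)))"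
proof (induction s)
  case (Cons x xs)
  have "(\<Sum>i<length (x # xs). c ((x # xs) ! i) * (\<Sum>j<i. w ((x # xs) ! j)))
      = (\<Sum>i<length xs. c (xs ! i) * (w x + (\<Sum>j<i. w (xs ! j))))"
    by (simp add: sum.lessThan_Suc_shift del: sum.lessThan_Suc)
  also have "\<dots> = w x * (\<Sum>i<length xs. c (xs ! i)) + (\<Sum>i<length xs. c (xs ! i) * (\<Sum>j<i. w (xs ! j)))"
    by (simp add: algebra_simps sum.distrib sum_distrib_left)
  finally show ?case using Cons by (simp add: sum_list_sum_nth atLeast0LessThan)
qed simp

lemma pair_sum_nonneg:
  "\<forall>x\<in>set s. 0 \<le> w x \<and> 0 \<le> c x \<Longrightarrow> 0 \<le> pair_sum w c s"
  by (induction s) (auto intro!: sum_list_nonneg add_nonneg_nonneg mult_nonneg_nonneg)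

lemma pair_sum_le_mult:
  assumes "\<forall>x\<in>set s. 0 \<le> w x \<and> 0 \<le> c x"
  shows "pair_sum w c s \<le> (\<Sum>x\<leftarrow>s. w x) * (\<Sum>x\<leftarrow>s. c x)"
  using assms
proof (induction s)
  case (Cons x xs)
  have "0 \<le> (\<Sum>y\<leftarrow>xs. w y)" "0 \<le> (\<Sum>y\<leftarrow>xs. c y)" "0 \<le> w x" "0 \<le> c x"
    using Cons.prems by (auto intro!: sum_list_nonneg)
  then have "0 \<le> c x * w x + c x * (\<Sum>y\<leftarrow>xs. w y)" by simp
  with Cons show ?case by (simp add: algebra_simps)
qed simp

text \<open>The exchange argument; the slack K makes the induction go through and is 0 when used.\<close>

lemma pair_sum_le_partition:
  assumes "\<forall>k. (\<Sum>x\<leftarrow>filter (\<lambda>x. \<not> P x) (take k s). w x)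
               \<le> K + \<rho> * (\<Sum>x\<leftarrow>filter (\<lambda>x. \<not> P x) (take k s). c x)"
    and "\<forall>k. \<rho> * (\<Sum>x\<leftarrow>filter P (drop k s). c x) \<le> (\<Sum>x\<leftarrow>filter P (drop k s). w x)"
    and "\<forall>x\<in>set s. 0 \<le> c x"
  shows "pair_sum w c s
           \<le> pair_sum w c (filter P s @ filter (\<lambda>x. \<not> P x) s) + K * (\<Sum>x\<leftarrow>filter P s. c x)"
  using assms
proof (induction s arbitrary: K)
  case (Cons x s)
  note partition = sum_list_map_filter_partition[where P = P and xs = s and f = c]
  have "0 \<le> c x" using Cons.prems(3) by simp
  have suffix: "\<forall>k. \<rho> * (\<Sum>x\<leftarrow>filter P (drop k s). c x) \<le> (\<Sum>x\<leftarrow>filter P (drop k s). w x)"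
    using Cons.prems(2) by (metis drop_Suc_Cons)
  show ?case
  proof (cases "P x")
    case True
    have "\<forall>k. (\<Sum>x\<leftarrow>filter (\<lambda>x. \<not> P x) (take k s). w x)
               \<le> K + \<rho> * (\<Sum>x\<leftarrow>filter (\<lambda>x. \<not> P x) (take k s). c x)"
      using Cons.prems(1) True by (metis filter.simps(2) take_Suc_Cons)
    with Cons.IH suffix Cons.prems(3)
    have "pair_sum w c s
           \<le> pair_sum w c (filter P s @ filter (\<lambda>x. \<not> P x) s) + K * (\<Sum>x\<leftarrow>filter P s. c x)"
      by simp
    moreover have "0 \<le> K" using Cons.prems(1)[rule_format, of 0] by simp
    ultimately show ?thesis
      using True mult_nonneg_nonneg[OF \<open>0 \<le> K\<close> \<open>0 \<le> c x\<close>] partition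
      by (simp add: algebra_simps)
  next
    case False
    have "\<forall>k. (\<Sum>x\<leftarrow>filter (\<lambda>x. \<not> P x) (take k s). w x)
               \<le> (K + \<rho> * c x - w x) + \<rho> * (\<Sum>x\<leftarrow>filter (\<lambda>x. \<not> P x) (take k s). c x)"
    proof
      fix k
      show "(\<Sum>x\<leftarrow>filter (\<lambda>x. \<not> P x) (take k s). w x)
               \<le> (K + \<rho> * c x - w x) + \<rho> * (\<Sum>x\<leftarrow>filter (\<lambda>x. \<not> P x) (take k s). c x)"
        using Cons.prems(1)[rule_format, of "Suc k"] False by (simp add: algebra_simps)
    qed
    with Cons.IH suffix Cons.prems(3)
    have IH: "pair_sum w c s \<le> pair_sum w c (filter P s @ filter (\<lambda>x. \<not> P x) s)
                + (K + \<rho> * c x - w x) * (\<Sum>x\<leftarrow>filter P s. c x)"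
      by simp
    have "c x * (\<rho> * (\<Sum>x\<leftarrow>filter P s. c x)) \<le> c x * (\<Sum>x\<leftarrow>filter P s. w x)"
      using suffix[rule_format, of 0] \<open>0 \<le> c x\<close> by (simp add: mult_left_mono)
    moreover have "w x * (\<Sum>y\<leftarrow>s. c y)
        = w x * (\<Sum>y\<leftarrow>filter P s. c y) + w x * (\<Sum>y\<leftarrow>filter (\<lambda>x. \<not> P x) s. c y)"
      by (simp flip: partition add: distrib_left)
    ultimately show ?thesis
      using IH False by (simp add: pair_sum_append algebra_simps)
  qed
qed simp

lemma penalized_cost_append:
  "penalized_cost w c \<theta> \<alpha> (xs @ ys)
     = penalized_cost w c \<theta> \<alpha> xs + penalized_cost w c \<theta> (\<alpha> - (\<Sum>x\<leftarrow>xs. w x)) ys"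
  by (simp add: penalized_cost_def pair_sum_append algebra_simps)

lemma penalized_cost_nonneg:
  assumes "\<forall>x\<in>set s. 0 \<le> w x \<and> 0 \<le> c x" "0 \<le> \<theta>"
    and "(\<Sum>x\<leftarrow>s. w x) \<le> \<rho> * (\<Sum>x\<leftarrow>s. c x)" "\<theta> * \<rho> \<le> \<alpha> - (\<Sum>x\<leftarrow>s. w x)"
  shows "0 \<le> penalized_cost w c \<theta> \<alpha> s"
proof -
  have "0 \<le> (\<Sum>x\<leftarrow>s. c x)" using assms(1) by (auto intro!: sum_list_nonneg)
  then have "0 \<le> (\<alpha> - (\<Sum>x\<leftarrow>s. w x) - \<theta> * \<rho>) * (\<Sum>x\<leftarrow>s. c x)"
    using assms(4) by simp
  moreover have "\<theta> * (\<Sum>x\<leftarrow>s. w x) \<le> \<theta> * (\<rho> * (\<Sum>x\<leftarrow>s. c x))"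
    using assms(2,3) by (rule mult_left_mono[rotated])
  ultimately show ?thesis
    using pair_sum_le_mult[OF assms(1)] by (simp add: penalized_cost_def algebra_simps)
qed

lemma penalized_cost_nonpos:
  assumes "\<forall>x\<in>set s. 0 \<le> w x \<and> 0 \<le> c x" "0 \<le> \<theta>"
    and "\<rho> * (\<Sum>x\<leftarrow>s. c x) \<le> (\<Sum>x\<leftarrow>s. w x)" "\<alpha> \<le> \<theta> * \<rho>"
  shows "penalized_cost w c \<theta> \<alpha> s \<le> 0"
proof -
  have "0 \<le> (\<Sum>x\<leftarrow>s. c x)" using assms(1) by (auto intro!: sum_list_nonneg)
  then have "\<alpha> * (\<Sum>x\<leftarrow>s. c x) \<le> \<theta> * (\<rho> * (\<Sum>x\<leftarrow>s. c x))"
    using mult_right_mono[OF assms(4)] by (simp add: mult.assoc)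
  moreover have "\<theta> * (\<rho> * (\<Sum>x\<leftarrow>s. c x)) \<le> \<theta> * (\<Sum>x\<leftarrow>s. w x)"
    using assms(2,3) by (rule mult_left_mono[rotated])
  ultimately show ?thesis
    using pair_sum_nonneg[OF assms(1)] by (simp add: penalized_cost_def)
qed

lemma Jcost_eq:
  "Jcost w c s = (if 0 < (\<Sum>x\<leftarrow>s. w x)
     then ereal (((\<Sum>x\<leftarrow>s. c x) - pair_sum w c s) / (\<Sum>x\<leftarrow>s. w x)) else \<infinity>)"
proof -
  have "(\<Sum>i<length s. c (s ! i) * (1 - (\<Sum>j<i. w (s ! j)))) = (\<Sum>x\<leftarrow>s. c x) - pair_sum w c s"
    by (simp add: pair_sum_conv_nth sum_list_sum_nth atLeast0LessThan algebra_simps sum_subtractf)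
  then show ?thesis by (simp add: Jcost_def sum_list_sum_nth atLeast0LessThan Let_def)
qed

lemma Jplus_less_iff:
  assumes "\<forall>x\<in>set s. 0 \<le> w x \<and> 0 \<le> c x" "0 < \<theta>"
  shows "Jplus w c s < ereal \<theta> \<longleftrightarrow> penalized_cost w c \<theta> 1 s < 0"
proof (cases "0 < (\<Sum>x\<leftarrow>s. w x)")
  case True
  then show ?thesis
    using assms(2) by (simp add: Jplus_def Jcost_eq penalized_cost_def divide_less_eq
        zero_ereal_def del: ereal_max) linarith
next
  case False
  have "0 \<le> (\<Sum>x\<leftarrow>s. w x)" using assms(1) by (auto intro!: sum_list_nonneg)
  with False have "(\<Sum>x\<leftarrow>s. w x) = 0" by simp
  then have "0 \<le> penalized_cost w c \<theta> 1 s"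
    using assms by (intro penalized_cost_nonneg[where \<rho> = 0]) auto
  with False show ?thesis by (simp add: Jplus_def Jcost_eq)
qed

section \<open>Initial sets of maximum density\<close>

lemma sum_le_density_mult:
  assumes "finite X" "\<forall>v\<in>X. 0 < c v" "density w c X \<le> \<rho>"
  shows "sum w X \<le> \<rho> * sum c X"
proof (cases "X = {}")
  case False
  then have "0 < sum c X" using assms(1,2) by (simp add: sum_pos)
  then show ?thesis using assms(3) False by (simp add: density_def divide_le_eq mult.commute)
qed simp

lemma sum_eq_density_mult:
  assumes "finite X" "\<forall>v\<in>X. 0 < c v"
  shows "sum w X = density w c X * sum c X"
proof (cases "X = {}")
  case False
  then have "0 < sum c X" using assms by (simp add: sum_pos)
  then show ?thesis using False by (simp add: density_def)
qed simp

definition max_density_initial ::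
  "(nat \<times> nat) set \<Rightarrow> (nat \<Rightarrow> real) \<Rightarrow> (nat \<Rightarrow> real) \<Rightarrow> nat set \<Rightarrow> nat set \<Rightarrow> bool" where
  "max_density_initial E w c V A \<longleftrightarrow>
     initial_set_in E V A \<and> (\<forall>X. initial_set_in E V X \<longrightarrow> density w c X \<le> density w c A)"

context
  fixes E :: "(nat \<times> nat) set" and w c :: "nat \<Rightarrow> real" and V A :: "nat set"
  assumes max: "max_density_initial E w c V A" and c_pos: "\<forall>v\<in>V. 0 < c v"
begin

lemma max_density_initial_sum_le:
  assumes "initial_set_in E V X"
  shows "sum w X \<le> density w c A * sum c X"
proof (rule sum_le_density_mult)
  show "finite X" using assms by (rule initial_set_in_finite)
  show "\<forall>v\<in>X. 0 < c v" using c_pos initial_set_in_subset[OF assms] by blast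
  show "density w c X \<le> density w c A" using max assms by (simp add: max_density_initial_def)
qed

lemma max_density_initial_facts: "initial_set_in E V A" "finite A" "A \<subseteq> V"
  using max initial_set_in_finite[of E V A] initial_set_in_subset[of E V A]
  by (auto simp: max_density_initial_def)

lemma max_density_initial_sum_eq: "sum w A = density w c A * sum c A"
  using max_density_initial_facts c_pos by (intro sum_eq_density_mult) auto

lemma max_density_initial_sum_Diff_le:
  assumes "initial_set_in E V X"
  shows "sum w (X - A) \<le> density w c A * sum c (X - A)"
proof -
  note A = max_density_initial_facts
  have "finite X" using assms by (rule initial_set_in_finite)
  have split: "sum f (X \<union> A) = sum f (X - A) + sum f A" for f :: "nat \<Rightarrow> real"
    using sum.union_disjoint[of "X - A" A f] \<open>finite X\<close> A(2) by auto
  have "sum w (X - A) + sum w A \<le> density w c A * (sum c (X - A) + sum c A)"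
    using max_density_initial_sum_le[OF initial_set_in_Un[OF assms A(1)]] by (simp add: split)
  moreover note max_density_initial_sum_eq
  ultimately show ?thesis by (simp add: algebra_simps)
qed

lemma max_density_initial_sum_Diff_ge:
  assumes "initial_set_in E V X"
  shows "density w c A * sum c (A - X) \<le> sum w (A - X)"
proof -
  note A = max_density_initial_facts
  have split: "sum f (A - X) = sum f A - sum f (A \<inter> X)" for f :: "nat \<Rightarrow> real"
    using sum.Int_Diff[OF A(2), of f X] by simp
  have "sum w (A \<inter> X) \<le> density w c A * sum c (A \<inter> X)"
    using max_density_initial_sum_le[OF initial_set_in_Int[OF A(1) assms]] .
  then show ?thesis
    using max_density_initial_sum_eq by (simp add: split algebra_simps)
qed

context
  assumes w_nonneg: "\<forall>v\<in>V. 0 \<le> w v"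
begin

text \<open>Negativity forces \<alpha> - w(s) \<le> \<theta> \<rho>(A), and the rest of A is at least as dense as A.\<close>

lemma penalized_cost_extend_le:
  assumes "0 \<le> \<theta>" and s: "is_search_in E V s" and neg: "penalized_cost w c \<theta> \<alpha> s < 0"
    and a: "is_search_in E V a" "set a = A"
  shows "penalized_cost w c \<theta> \<alpha> (s @ filter (\<lambda>x. x \<notin> set s) a) \<le> penalized_cost w c \<theta> \<alpha> s"
proof -
  let ?\<rho> = "density w c A" and ?r = "filter (\<lambda>x. x \<notin> set s) a"
  have init_s: "initial_set_in E V (set s)" using s by (auto simp: initial_set_in_def)
  have r: "is_search_in E V (s @ ?r)" using is_search_in_append_filter[OF s a(1)] .
  have W_s: "(\<Sum>x\<leftarrow>s. w x) \<le> ?\<rho> * (\<Sum>x\<leftarrow>s. c x)"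
    unfolding sum_list_search_eq_sum[OF s] by (rule max_density_initial_sum_le[OF init_s])
  have "\<alpha> - (\<Sum>x\<leftarrow>s. w x) \<le> \<theta> * ?\<rho>"
  proof (rule ccontr)
    assume "\<not> \<alpha> - (\<Sum>x\<leftarrow>s. w x) \<le> \<theta> * ?\<rho>"
    then have "0 \<le> penalized_cost w c \<theta> \<alpha> s"
      using search_weights_nonneg[OF s w_nonneg c_pos] \<open>0 \<le> \<theta>\<close> W_s
      by (intro penalized_cost_nonneg) auto
    with neg show False by simp
  qed
  moreover have "?\<rho> * (\<Sum>x\<leftarrow>?r. c x) \<le> (\<Sum>x\<leftarrow>?r. w x)"
  proof -
    have "distinct ?r" "set ?r = A - set s" using a by (auto simp: is_search_in_def)
    then show ?thesis
      using max_density_initial_sum_Diff_ge[OF init_s] by (simp add: sum_list_distinct_conv_sum_set)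
  qed
  moreover have "\<forall>x\<in>set ?r. 0 \<le> w x \<and> 0 \<le> c x"
    using search_weights_nonneg[OF r w_nonneg c_pos] by simp
  ultimately have "penalized_cost w c \<theta> (\<alpha> - (\<Sum>x\<leftarrow>s. w x)) ?r \<le> 0"
    using \<open>0 \<le> \<theta>\<close> by (intro penalized_cost_nonpos) auto
  then show ?thesis by (simp add: penalized_cost_append)
qed

lemma penalized_cost_front_load_le:
  assumes s: "is_search_in E V s" and "A \<subseteq> set s"
  shows "penalized_cost w c \<theta> \<alpha> (filter (\<lambda>x. x \<in> A) s @ filter (\<lambda>x. x \<notin> A) s)
           \<le> penalized_cost w c \<theta> \<alpha> s"
proof -
  let ?\<rho> = "density w c A"
  have "pair_sum w c s \<le> pair_sum w c (filter (\<lambda>x. x \<in> A) s @ filter (\<lambda>x. x \<notin> A) s)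
          + 0 * (\<Sum>x\<leftarrow>filter (\<lambda>x. x \<in> A) s. c x)"
  proof (rule pair_sum_le_partition, safe)
    fix k
    let ?p = "take k s"
    have p: "is_search_in E V ?p" "initial_set_in E V (set ?p)"
      using is_search_in_take[OF s] by (auto simp: initial_set_in_def)
    have "distinct (filter (\<lambda>x. x \<notin> A) ?p)" "set (filter (\<lambda>x. x \<notin> A) ?p) = set ?p - A"
      using p(1) by (auto simp: is_search_in_def)
    then show "(\<Sum>x\<leftarrow>filter (\<lambda>x. x \<notin> A) ?p. w x)
               \<le> 0 + ?\<rho> * (\<Sum>x\<leftarrow>filter (\<lambda>x. x \<notin> A) ?p. c x)"
      using max_density_initial_sum_Diff_le[OF p(2)] by (simp add: sum_list_distinct_conv_sum_set)
    have "set (take k s) \<inter> set (drop k s) = {}"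
      using s by (simp add: is_search_in_def set_take_disj_set_drop_if_distinct)
    moreover have "set s = set (take k s) \<union> set (drop k s)"
      by (metis append_take_drop_id set_append)
    ultimately have "distinct (filter (\<lambda>x. x \<in> A) (drop k s))"
      "set (filter (\<lambda>x. x \<in> A) (drop k s)) = A - set ?p"
      using s \<open>A \<subseteq> set s\<close> by (auto simp: is_search_in_def)
    then show "?\<rho> * (\<Sum>x\<leftarrow>filter (\<lambda>x. x \<in> A) (drop k s). c x)
               \<le> (\<Sum>x\<leftarrow>filter (\<lambda>x. x \<in> A) (drop k s). w x)"
      using max_density_initial_sum_Diff_ge[OF p(2)] by (simp add: sum_list_distinct_conv_sum_set)
  qed (use search_weights_nonneg[OF s w_nonneg c_pos] in auto)
  moreover have "(\<Sum>x\<leftarrow>filter (\<lambda>x. x \<in> A) s @ filter (\<lambda>x. x \<notin> A) s. f x) = (\<Sum>x\<leftarrow>s. f x)"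
    for f :: "nat \<Rightarrow> real"
    using sum_list_map_filter_partition[where P = "\<lambda>x. x \<in> A" and xs = s and f = f] by simp
  ultimately show ?thesis by (simp add: penalized_cost_def)
qed

lemma exists_block_first_search:
  assumes "0 \<le> \<theta>" and s: "is_search_in E V s" and neg: "penalized_cost w c \<theta> \<alpha> s < 0"
  shows "\<exists>a t. is_search_in E V a \<and> set a = A \<and> is_search_in E (V - A) t \<and>
           penalized_cost w c \<theta> \<alpha> (a @ t) \<le> penalized_cost w c \<theta> \<alpha> s"
proof -
  obtain a0 where a0: "is_search_in E V a0" "set a0 = A"
    using max_density_initial_facts(1) by (auto simp: initial_set_in_def)
  define s' where "s' = s @ filter (\<lambda>x. x \<notin> set s) a0"
  have s': "is_search_in E V s'" "A \<subseteq> set s'"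
    using is_search_in_append_filter[OF s a0(1)] a0(2) by (auto simp: s'_def)
  have "is_search_in E {x \<in> V. x \<notin> A} (filter (\<lambda>x. x \<notin> A) s')"
    by (rule is_search_in_filter[OF s'(1)])
  moreover have "{x \<in> V. x \<notin> A} = V - A" by auto
  moreover have "set (filter (\<lambda>x. x \<in> A) s') = A" using s'(2) by auto
  moreover have "penalized_cost w c \<theta> \<alpha> s' \<le> penalized_cost w c \<theta> \<alpha> s"
    unfolding s'_def using penalized_cost_extend_le[OF assms a0] .
  ultimately show ?thesis
    using is_search_in_filter_initial[OF s'(1) max_density_initial_facts(1)]
      order_trans[OF penalized_cost_front_load_le[OF s']]
    by (intro exI[of _ "filter (\<lambda>x. x \<in> A) s'"] exI[of _ "filter (\<lambda>x. x \<notin> A) s'"]) auto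
qed

end

end

section \<open>Sidney decompositions\<close>

text \<open>Recursive form of sidney_decomposition, without the covering and nonemptiness conditions.\<close>

fun sidney_chain ::
  "(nat \<times> nat) set \<Rightarrow> (nat \<Rightarrow> real) \<Rightarrow> (nat \<Rightarrow> real) \<Rightarrow> nat set list \<Rightarrow> bool" where
  "sidney_chain E w c [] \<longleftrightarrow> True"
| "sidney_chain E w c (A # As) \<longleftrightarrow>
     max_density_initial E w c (A \<union> \<Union>(set As)) A \<and> A \<inter> \<Union>(set As) = {} \<and> sidney_chain E w c As"

lemma sidney_chain_if_nth:
  assumes "\<forall>i<length As. max_density_initial E w c (\<Union>(set (drop i As))) (As ! i)"
    and "\<forall>i j. i < j \<and> j < length As \<longrightarrow> As ! i \<inter> As ! j = {}"
  shows "sidney_chain E w c As"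
  using assms
proof (induction As)
  case (Cons A As)
  have "A \<inter> X = {}" if "X \<in> set As" for X
  proof -
    obtain j where "j < length As" "X = As ! j" using \<open>X \<in> set As\<close> by (auto simp: in_set_conv_nth)
    then show ?thesis using Cons.prems(2)[rule_format, of 0 "Suc j"] by simp
  qed
  moreover have "sidney_chain E w c As"
  proof (rule Cons.IH)
    show "\<forall>i<length As. max_density_initial E w c (\<Union>(set (drop i As))) (As ! i)"
      using Cons.prems(1) by (metis Suc_less_eq drop_Suc_Cons length_Cons nth_Cons_Suc)
    show "\<forall>i j. i < j \<and> j < length As \<longrightarrow> As ! i \<inter> As ! j = {}"
      using Cons.prems(2) by (metis Suc_less_eq length_Cons nth_Cons_Suc)
  qed
  ultimately show ?case using Cons.prems(1)[rule_format, of 0] by auto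
qed simp

lemma sidney_decomposition_imp_chain:
  "sidney_decomposition n E w c As \<Longrightarrow> sidney_chain E w c As"
  unfolding sidney_decomposition_def Let_def
  by (rule sidney_chain_if_nth) (auto simp: max_density_initial_def)

lemma sidney_chain_prefix_search:
  assumes "sidney_chain E w c As" and "\<forall>v\<in>\<Union>(set As). 0 \<le> w v \<and> 0 < c v" and "0 \<le> \<theta>"
    and "is_search_in E (\<Union>(set As)) s"
  shows "\<exists>i \<le> length As. \<exists>s'. is_search_in E (\<Union>(set As)) s' \<and> set s' = \<Union>(set (take i As)) \<and>
           penalized_cost w c \<theta> \<alpha> s' \<le> penalized_cost w c \<theta> \<alpha> s"
  using assms
proof (induction As arbitrary: s \<alpha>)
  case Nil
  then have "s = []" by (simp add: is_search_in_def)
  then show ?case by (intro exI[of _ 0] exI[of _ "[]"]) simp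
next
  case (Cons A As)
  let ?V = "A \<union> \<Union>(set As)"
  show ?case
  proof (cases "0 \<le> penalized_cost w c \<theta> \<alpha> s")
    case True
    then show ?thesis by (intro exI[of _ 0] exI[of _ "[]"]) (simp add: penalized_cost_def)
  next
    case False
    have max: "max_density_initial E w c ?V A" and disj: "A \<inter> \<Union>(set As) = {}"
      and chain: "sidney_chain E w c As"
      using Cons.prems(1) by auto
    have c_pos: "\<forall>v\<in>?V. 0 < c v" and w_nonneg: "\<forall>v\<in>?V. 0 \<le> w v"
      using Cons.prems(2) by auto
    obtain a t where a: "is_search_in E ?V a" "set a = A" and t: "is_search_in E (?V - A) t"
      and a_t: "penalized_cost w c \<theta> \<alpha> (a @ t) \<le> penalized_cost w c \<theta> \<alpha> s"
    proof -
      have "is_search_in E ?V s" "penalized_cost w c \<theta> \<alpha> s < 0" using Cons.prems(4) False by auto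
      then show thesis
        using that exists_block_first_search[OF max c_pos w_nonneg Cons.prems(3)] by blast
    qed
    have V_minus_A: "?V - A = \<Union>(set As)" using disj by auto
    have "\<forall>v\<in>\<Union>(set As). 0 \<le> w v \<and> 0 < c v" using Cons.prems(2) by simp
    then obtain j t' where "j \<le> length As" and t': "is_search_in E (\<Union>(set As)) t'"
      "set t' = \<Union>(set (take j As))"
      "penalized_cost w c \<theta> (\<alpha> - (\<Sum>x\<leftarrow>a. w x)) t'
         \<le> penalized_cost w c \<theta> (\<alpha> - (\<Sum>x\<leftarrow>a. w x)) t"
      using Cons.IH[OF chain _ Cons.prems(3)] t V_minus_A by metis
    have "is_search_in E (\<Union>(set (A # As))) (a @ t')"
      using is_search_in_append[OF a(1)] t'(1) a(2) V_minus_A by simp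
    moreover have "set (a @ t') = \<Union>(set (take (Suc j) (A # As)))" using a(2) t'(2) by simp
    moreover have "penalized_cost w c \<theta> \<alpha> (a @ t') \<le> penalized_cost w c \<theta> \<alpha> s"
      using a_t t'(3) by (simp add: penalized_cost_append)
    moreover have "Suc j \<le> length (A # As)" using \<open>j \<le> length As\<close> by simp
    ultimately show ?thesis by blast
  qed
qed

lemma finite_ereal_gap_above:
  fixes T :: "ereal set"
  assumes "finite T"
  shows "\<exists>\<theta> > \<mu>. \<forall>x\<in>T. x < ereal \<theta> \<longrightarrow> x \<le> ereal \<mu>"
proof (cases "{x \<in> T. ereal \<mu> < x} = {}")
  case True
  then show ?thesis by (intro exI[of _ "\<mu> + 1"]) auto
next
  case False
  let ?m = "Min {x \<in> T. ereal \<mu> < x}"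
  have "ereal \<mu> < ?m" using False assms by simp
  then obtain \<theta> where "ereal \<mu> < ereal \<theta>" "ereal \<theta> < ?m" by (blast dest: ereal_dense2)
  moreover have "\<not> ereal \<mu> < x" if "x \<in> T" "x < ereal \<theta>" for x
  proof
    assume "ereal \<mu> < x"
    then have "?m \<le> x" using that(1) assms by (intro Min_le) auto
    then show False using that(2) \<open>ereal \<theta> < ?m\<close> by simp
  qed
  ultimately show ?thesis by (intro exI[of _ \<theta>]) (auto simp: not_less)
qed

lemma ex_Jplus_minimal_search:
  assumes "finite V"
  obtains s where "is_search_in E V s" "\<And>t. is_search_in E V t \<Longrightarrow> Jplus w c s \<le> Jplus w c t"
proof -
  have "[] \<in> {s. is_search_in E V s}" by simp
  then obtain s where "is_arg_min (Jplus w c) (\<lambda>s. s \<in> {s. is_search_in E V s}) s"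
    using ex_is_arg_min_if_finite[OF finite_searches[OF assms]] by blast
  then show thesis using that by (auto simp: is_arg_min_def not_less)
qed

lemma sidney_chain_finite: "sidney_chain E w c As \<Longrightarrow> finite (\<Union>(set As))"
  by (induction As) (auto simp: max_density_initial_def dest: initial_set_in_finite)

lemma sidney_chain_prefix_minimizes_Jplus:
  assumes chain: "sidney_chain E w c As" and "As \<noteq> []"
    and pos: "\<forall>v\<in>\<Union>(set As). 0 \<le> w v \<and> 0 < c v"
  shows "\<exists>i\<in>{1..length As}. \<exists>s. is_search_in E (\<Union>(set As)) s \<and> set s = \<Union>(set (take i As)) \<and>
           (\<forall>t. is_search_in E (\<Union>(set As)) t \<longrightarrow> Jplus w c s \<le> Jplus w c t)"
proof -
  let ?V = "\<Union>(set As)"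
  let ?S = "{s. is_search_in E ?V s}"
  have fin: "finite ?S" using finite_searches sidney_chain_finite[OF chain] by blast
  obtain ss where ss: "is_search_in E ?V ss"
    and ss_min: "\<And>t. is_search_in E ?V t \<Longrightarrow> Jplus w c ss \<le> Jplus w c t"
    using ex_Jplus_minimal_search[OF sidney_chain_finite[OF chain]] by blast
  obtain A As' where As: "As = A # As'" using \<open>As \<noteq> []\<close> by (cases As) auto
  show ?thesis
  proof (cases "Jplus w c ss = \<infinity>")
    case True
    obtain a where "is_search_in E ?V a" "set a = A"
      using chain As by (auto simp: max_density_initial_def initial_set_in_def)
    moreover have "Jplus w c t = \<infinity>" if "is_search_in E ?V t" for t
      using ss_min[OF that] True by simp
    ultimately show ?thesis using As by (intro bexI[of _ 1]) auto
  next
    case False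
    have "0 \<le> Jplus w c ss" by (simp add: Jplus_def)
    with False obtain \<mu> where \<mu>: "Jplus w c ss = ereal \<mu>" "0 \<le> \<mu>"
      by (cases "Jplus w c ss") auto
    obtain \<theta> where "\<mu> < \<theta>"
      and gap: "\<And>t. t \<in> ?S \<Longrightarrow> Jplus w c t < ereal \<theta> \<Longrightarrow> Jplus w c t \<le> ereal \<mu>"
      using finite_ereal_gap_above[of "Jplus w c ` ?S" \<mu>] fin by auto
    have nonneg: "\<forall>x\<in>set t. 0 \<le> w x \<and> 0 \<le> c x" if "is_search_in E ?V t" for t
      using that pos by (intro search_weights_nonneg) auto
    have "0 < \<theta>" using \<open>\<mu> < \<theta>\<close> \<mu>(2) by simp
    have "penalized_cost w c \<theta> 1 ss < 0"
      using Jplus_less_iff[OF nonneg[OF ss] \<open>0 < \<theta>\<close>] \<mu> \<open>\<mu> < \<theta>\<close> by simp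
    then obtain i s where "i \<le> length As" and s: "is_search_in E ?V s" "set s = \<Union>(set (take i As))"
      and neg: "penalized_cost w c \<theta> 1 s < 0"
      using sidney_chain_prefix_search[OF chain pos _ ss, of \<theta> 1] \<open>0 < \<theta>\<close> by fastforce
    have "i \<noteq> 0"
    proof
      assume "i = 0"
      then have "s = []" using s(2) by simp
      then show False using neg by (simp add: penalized_cost_def)
    qed
    have "Jplus w c s \<le> Jplus w c ss"
      using gap[of s] s(1) Jplus_less_iff[OF nonneg[OF s(1)] \<open>0 < \<theta>\<close>] neg \<mu> by simp
    then have "\<forall>t. is_search_in E ?V t \<longrightarrow> Jplus w c s \<le> Jplus w c t"
      using ss_min order_trans by blast
    moreover have "i \<in> {1..length As}" using \<open>i \<le> length As\<close> \<open>i \<noteq> 0\<close> by simp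
    ultimately show ?thesis using s by blast
  qed
qed

theorem mainTheorem3:
  fixes n :: nat and E :: "(nat \<times> nat) set" and w c :: "nat \<Rightarrow> real"
    and As :: "nat set list"
  assumes "n \<ge> 1"
    and "is_dag n E"
    and "\<forall>v \<in> {1..n}. w v \<ge> 0"
    and "\<forall>v \<in> {1..n}. c v > 0"
    and "sidney_decomposition n E w c As"
  shows "\<exists>i \<in> {1..length As}. \<exists>s. is_search n E s \<and> set s = \<Union> (set (take i As)) \<and>
           (\<forall>t. is_search n E t \<longrightarrow> Jplus w c s \<le> Jplus w c t)"
proof -
  have V: "\<Union>(set As) = {1..n}" using assms(5) by (simp add: sidney_decomposition_def)
  then have "As \<noteq> []" using assms(1) by auto
  moreover have "\<forall>v\<in>\<Union>(set As). 0 \<le> w v \<and> 0 < c v" using V assms(3,4) by simp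
  ultimately show ?thesis
    using sidney_chain_prefix_minimizes_Jplus[OF sidney_decomposition_imp_chain[OF assms(5)]] V
    by (simp add: is_search_def)
qed

end
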